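(* Suppose the hyper-triple $\{P\}\,C\,\{Q\}$ is valid, and let $S$ be a set of initial extended states with $S \models P$. Then: (1) the set $\mathrm{sem}(C,S)$ of reachable states satisfies the relaxation of $Q$, i.e. $\mathrm{sem}(C,S) \in \mathcal{R}(Q)$; (2) if, additionally, $Q$ does not mention the label $\mathrm{uk}$, contains no hyper separating conjunction $\star$, and constrains every existentially-quantified state to carry label $\mathrm{ok}$ or $\mathrm{er}$, then $\mathrm{sem}(C,S) \models Q$.
   Context: Setting: Hyper Separation Logic (HSL) for a heap-manipulating imperative language. An extended state is $\omega = \langle \Lambda, \sigma_\epsilon\rangle$ with a logical store $\Lambda$ (total map from logical variables to $\mathbb{N}$), a program state $\sigma = \langle s, h\rangle$ (total store $s$ from program variables to $\mathbb{N}$, finite partial heap $h$ from $\mathbb{N}$ to $\mathbb{N}\cup\{\bot\}$), and a label $\epsilon \in \{\mathrm{ok}, \mathrm{er}, \mathrm{uk}\}$. Assertions are sets of extended states; hyper-assertions are sets of such sets. Syntactic hyper-assertions use state quantifiers $\forall\langle\sigma\rangle$, $\exists\langle\sigma\rangle$ and atoms $\sigma(\epsilon : p)$ meaning that the state bound to $\sigma$ has label $\epsilon$ and satisfies the separation-logic assertion $p$. $\mathrm{sem}(C,S)$: each $\mathrm{ok}$ state of $S$ is executed by $C$ (small-step semantics); successful terminal executions yield $\mathrm{ok}$ states; executions aborting with an ordinary (local) error (failed assertion, null dereference, access to freed memory) yield an $\mathrm{er}$ state recording the state at the abort; executions aborting with a domain-violation error (access to unallocated memory) yield a $\mathrm{uk}$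 state recording the state at the abort; $\mathrm{er}$ and $\mathrm{uk}$ states of $S$ are kept unchanged; logical stores are preserved. State combination: $\langle\Lambda,(s,h)_\epsilon\rangle = \langle\Lambda_1,(s_1,h_1)_{\epsilon_1}\rangle \oplus \langle\Lambda_2,(s_2,h_2)_{\epsilon_2}\rangle$ iff $s=s_1=s_2$, $\Lambda=\Lambda_1=\Lambda_2$, $h$ is the disjoint union of $h_1,h_2$, and $\epsilon$ is $\mathrm{uk}$ if either $\epsilon_i$ is $\mathrm{uk}$, else $\mathrm{er}$ if either is $\mathrm{er}$, else $\mathrm{ok}$. $p * q = \{\omega \mid \omega_p\in p, \omega_q\in q, \omega = \omega_p\oplus\omega_q\}$. Hyper separating conjunction: $S \in P\star Q$ iff there are $S_P\in P$, $S_Q\in Q$ with $S\subseteq S_P * S_Q$, and for every $\omega_1\in S_P$ there exist $\omega\in S$, $\omega_2\in S_Q$ with $\omega=\omega_1\oplus\omega_2$, and symmetrically for every $\omega_2\in S_Q$. Relaxation: a state $\langle\Lambda,\sigma_\epsilon\rangle$ overapproximates $\langle\Lambda',\sigma'_{\epsilon'}\rangle$ iff ($\epsilon=\mathrm{uk}$ and $\Lambda=\Lambda'$) or ($\epsilon\in\{\mathrm{ok},\mathrm{er}\}$ and the two states are equal). A set $S_0$ overapproximates $S$ iff every $\mathrm{ok}$/$\mathrm{er}$ state of $S_0$ is in $S$ and every state of $S$ is overapproximated by some state of $S_0$. $\mathcal{R}(Q) = \{S \mid \exists S_0\in Q.\ S_0 \text{ overapproximates } S\}$. Validity: $\{P\}\,C\,\{Q\}$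 is valid iff for every admissible frame $f$ (a set of $\mathrm{ok}$-labeled extended states whose membership does not depend on the values of program variables modified by $C$) and every $S \in P \star \mathcal{P}(f)$, we have $\mathrm{sem}(C,S) \in \mathcal{R}(Q\star\mathcal{P}(f))$, where $\mathcal{P}(f)$ is the powerset of $f$. *)

theory Defs
  imports Main "HOL-Library.Finite_Map"
begin

type_synonym pvar = string
type_synonym lvar = string
type_synonym val = nat

datatype hval = Val val | Bot   \<comment> \<open>Bot: deallocated cell\<close>

type_synonym store = "pvar \<Rightarrow> val"
type_synonym heap = "(nat, hval) fmap"
type_synonym pstate = "store \<times> heap"
type_synonym lstore = "lvar \<Rightarrow> val"

datatype label = Ok | Er | Uk

type_synonym ext = "lstore \<times> pstate \<times> label"
type_synonym assn = "ext set"
type_synonym hyperassn = "ext set set"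

definition lab :: "ext \<Rightarrow> label" where "lab \<omega> = snd (snd \<omega>)"

type_synonym aexp = "store \<Rightarrow> val"
type_synonym bexp = "store \<Rightarrow> bool"

datatype cmd =
    Skip
  | Assign pvar aexp
  | Havoc pvar
  | Assume bexp
  | Assert bexp
  | Seq cmd cmd
  | Choice cmd cmd
  | Iter cmd
  | Alloc pvar
  | Free aexp
  | Load pvar aexp
  | Store aexp aexp

fun modv :: "cmd \<Rightarrow> pvar set" where
  "modv (Assign x _) = {x}"
| "modv (Havoc x) = {x}"
| "modv (Alloc x) = {x}"
| "modv (Load x _) = {x}"
| "modv (Seq C1 C2) = modv C1 \<union> modv C2"
| "modv (Choice C1 C2) = modv C1 \<union> modv C2"
| "modv (Iter C) = modv C"
| "modv _ = {}"

text \<open>Errors when accessing address a in heap h: null pointer or freed cell give an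
ordinary (local) error Er; an unallocated cell gives a domain-violation error Uk.\<close>
inductive acc_err :: "heap \<Rightarrow> nat \<Rightarrow> label \<Rightarrow> bool" where
  "acc_err h 0 Er"
| "a \<noteq> 0 \<Longrightarrow> fmlookup h a = Some Bot \<Longrightarrow> acc_err h a Er"
| "a \<noteq> 0 \<Longrightarrow> fmlookup h a = None \<Longrightarrow> acc_err h a Uk"

inductive step :: "cmd \<times> pstate \<Rightarrow> cmd \<times> pstate \<Rightarrow> bool" where
  s_assign: "step (Assign x e, (s, h)) (Skip, (s(x := e s), h))"
| s_havoc: "step (Havoc x, (s, h)) (Skip, (s(x := v), h))"
| s_assume: "b s \<Longrightarrow> step (Assume b, (s, h)) (Skip, (s, h))"
| s_assert: "b s \<Longrightarrow> step (Assert b, (s, h)) (Skip, (s, h))"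
| s_seq1: "step (Seq Skip C2, \<sigma>) (C2, \<sigma>)"
| s_seq2: "step (C1, \<sigma>) (C1', \<sigma>') \<Longrightarrow> step (Seq C1 C2, \<sigma>) (Seq C1' C2, \<sigma>')"
| s_choice1: "step (Choice C1 C2, \<sigma>) (C1, \<sigma>)"
| s_choice2: "step (Choice C1 C2, \<sigma>) (C2, \<sigma>)"
| s_iter1: "step (Iter C, \<sigma>) (Skip, \<sigma>)"
| s_iter2: "step (Iter C, \<sigma>) (Seq C (Iter C), \<sigma>)"
| s_alloc: "a \<noteq> 0 \<Longrightarrow> fmlookup h a = None \<or> fmlookup h a = Some Bot \<Longrightarrow>
     step (Alloc x, (s, h)) (Skip, (s(x := a), fmupd a (Val v) h))"
| s_free: "e s \<noteq> 0 \<Longrightarrow> fmlookup h (e s) = Some (Val v) \<Longrightarrow>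
     step (Free e, (s, h)) (Skip, (s, fmupd (e s) Bot h))"
| s_load: "e s \<noteq> 0 \<Longrightarrow> fmlookup h (e s) = Some (Val v) \<Longrightarrow>
     step (Load x e, (s, h)) (Skip, (s(x := v), h))"
| s_store: "e s \<noteq> 0 \<Longrightarrow> fmlookup h (e s) = Some (Val v) \<Longrightarrow>
     step (Store e e', (s, h)) (Skip, (s, fmupd (e s) (Val (e' s)) h))"

inductive aborts :: "cmd \<Rightarrow> pstate \<Rightarrow> label \<Rightarrow> bool" where
  a_assert: "\<not> b s \<Longrightarrow> aborts (Assert b) (s, h) Er"
| a_free: "acc_err h (e s) \<epsilon> \<Longrightarrow> aborts (Free e) (s, h) \<epsilon>"
| a_load: "acc_err h (e s) \<epsilon> \<Longrightarrow> aborts (Load x e) (s, h) \<epsilon>"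
| a_store: "acc_err h (e s) \<epsilon> \<Longrightarrow> aborts (Store e e') (s, h) \<epsilon>"
| a_seq: "aborts C1 \<sigma> \<epsilon> \<Longrightarrow> aborts (Seq C1 C2) \<sigma> \<epsilon>"

definition sem :: "cmd \<Rightarrow> ext set \<Rightarrow> ext set" where
  "sem C S =
     {(\<Lambda>, \<sigma>', Ok) | \<Lambda> \<sigma> \<sigma>'. (\<Lambda>, \<sigma>, Ok) \<in> S \<and> step\<^sup>*\<^sup>* (C, \<sigma>) (Skip, \<sigma>')}
   \<union> {(\<Lambda>, \<sigma>', \<epsilon>) | \<Lambda> \<sigma> \<sigma>' C' \<epsilon>. (\<Lambda>, \<sigma>, Ok) \<in> S \<and> step\<^sup>*\<^sup>* (C, \<sigma>) (C', \<sigma>')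
                                  \<and> aborts C' \<sigma>' \<epsilon>}
   \<union> {\<omega> \<in> S. lab \<omega> \<noteq> Ok}"

fun ljoin :: "label \<Rightarrow> label \<Rightarrow> label" where
  "ljoin Uk _ = Uk"
| "ljoin _ Uk = Uk"
| "ljoin Er _ = Er"
| "ljoin _ Er = Er"
| "ljoin Ok Ok = Ok"

definition comb :: "ext \<Rightarrow> ext \<Rightarrow> ext \<Rightarrow> bool" where
  "comb \<omega>1 \<omega>2 \<omega> \<longleftrightarrow>
     (case \<omega>1 of (\<Lambda>1, (s1, h1), \<epsilon>1) \<Rightarrow> case \<omega>2 of (\<Lambda>2, (s2, h2), \<epsilon>2) \<Rightarrow>
      case \<omega> of (\<Lambda>, (s, h), \<epsilon>) \<Rightarrow>
        s = s1 \<and> s = s2 \<and> \<Lambda> = \<Lambda>1 \<and> \<Lambda> = \<Lambda>2 \<and>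
        fmdom' h1 \<inter> fmdom' h2 = {} \<and> h = h1 ++\<^sub>f h2 \<and> \<epsilon> = ljoin \<epsilon>1 \<epsilon>2)"

definition sep_conj :: "assn \<Rightarrow> assn \<Rightarrow> assn" where
  "sep_conj p q = {\<omega>. \<exists>\<omega>p\<in>p. \<exists>\<omega>q\<in>q. comb \<omega>p \<omega>q \<omega>}"

definition hstar :: "hyperassn \<Rightarrow> hyperassn \<Rightarrow> hyperassn" where
  "hstar P Q = {S. \<exists>SP\<in>P. \<exists>SQ\<in>Q. S \<subseteq> sep_conj SP SQ
      \<and> (\<forall>\<omega>1\<in>SP. \<exists>\<omega>\<in>S. \<exists>\<omega>2\<in>SQ. comb \<omega>1 \<omega>2 \<omega>)
      \<and> (\<forall>\<omega>2\<in>SQ. \<exists>\<omega>\<in>S. \<exists>\<omega>1\<in>SP. comb \<omega>1 \<omega>2 \<omega>)}"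

definition overapprox :: "ext \<Rightarrow> ext \<Rightarrow> bool" where
  "overapprox \<omega>0 \<omega> \<longleftrightarrow> (lab \<omega>0 = Uk \<and> fst \<omega>0 = fst \<omega>) \<or> (lab \<omega>0 \<in> {Ok, Er} \<and> \<omega>0 = \<omega>)"

definition overapprox_set :: "ext set \<Rightarrow> ext set \<Rightarrow> bool" where
  "overapprox_set S0 S \<longleftrightarrow> (\<forall>\<omega>\<in>S0. lab \<omega> \<in> {Ok, Er} \<longrightarrow> \<omega> \<in> S) \<and> (\<forall>\<omega>\<in>S. \<exists>\<omega>0\<in>S0. overapprox \<omega>0 \<omega>)"

definition relax :: "hyperassn \<Rightarrow> hyperassn" where
  "relax Q = {S. \<exists>S0\<in>Q. overapprox_set S0 S}"

definition admissible_frame :: "cmd \<Rightarrow> assn \<Rightarrow> bool" where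
  "admissible_frame C f \<longleftrightarrow> (\<forall>\<omega>\<in>f. lab \<omega> = Ok) \<and>
     (\<forall>\<Lambda> s s' h. (\<forall>x. x \<notin> modv C \<longrightarrow> s x = s' x) \<longrightarrow>
        ((\<Lambda>, (s, h), Ok) \<in> f \<longleftrightarrow> (\<Lambda>, (s', h), Ok) \<in> f))"

definition valid :: "hyperassn \<Rightarrow> cmd \<Rightarrow> hyperassn \<Rightarrow> bool" where
  "valid P C Q \<longleftrightarrow> (\<forall>f. admissible_frame C f \<longrightarrow>
      (\<forall>S\<in>hstar P (Pow f). sem C S \<in> relax (hstar Q (Pow f))))"

type_synonym svar = string
type_synonym vvar = string

datatype hassn =
    HAtom svar label "(vvar \<Rightarrow> val) \<Rightarrow> assn"
  | HPure "(vvar \<Rightarrow> val) \<Rightarrow> bool"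
  | HAnd hassn hassn
  | HOr hassn hassn
  | HForallS svar hassn
  | HExistsS svar hassn
  | HForallV vvar hassn
  | HExistsV vvar hassn
  | HStar hassn hassn

fun hsat :: "(svar \<Rightarrow> ext) \<Rightarrow> (vvar \<Rightarrow> val) \<Rightarrow> hassn \<Rightarrow> ext set \<Rightarrow> bool" where
  "hsat \<Sigma> V (HAtom \<sigma> \<epsilon> p) S \<longleftrightarrow> lab (\<Sigma> \<sigma>) = \<epsilon> \<and> \<Sigma> \<sigma> \<in> p V"
| "hsat \<Sigma> V (HPure b) S \<longleftrightarrow> b V"
| "hsat \<Sigma> V (HAnd A B) S \<longleftrightarrow> hsat \<Sigma> V A S \<and> hsat \<Sigma> V B S"
| "hsat \<Sigma> V (HOr A B) S \<longleftrightarrow> hsat \<Sigma> V A S \<or> hsat \<Sigma> V B S"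
| "hsat \<Sigma> V (HForallS \<sigma> A) S \<longleftrightarrow> (\<forall>\<omega>\<in>S. hsat (\<Sigma>(\<sigma> := \<omega>)) V A S)"
| "hsat \<Sigma> V (HExistsS \<sigma> A) S \<longleftrightarrow> (\<exists>\<omega>\<in>S. hsat (\<Sigma>(\<sigma> := \<omega>)) V A S)"
| "hsat \<Sigma> V (HForallV x A) S \<longleftrightarrow> (\<forall>v. hsat \<Sigma> (V(x := v)) A S)"
| "hsat \<Sigma> V (HExistsV x A) S \<longleftrightarrow> (\<exists>v. hsat \<Sigma> (V(x := v)) A S)"
| "hsat \<Sigma> V (HStar A B) S \<longleftrightarrow>
     S \<in> hstar {S'. hsat \<Sigma> V A S'} {S'. hsat \<Sigma> V B S'}"

definition hsem :: "(svar \<Rightarrow> ext) \<Rightarrow> (vvar \<Rightarrow> val) \<Rightarrow> hassn \<Rightarrow> hyperassn" where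
  "hsem \<Sigma> V A = {S. hsat \<Sigma> V A S}"

fun no_uk :: "hassn \<Rightarrow> bool" where
  "no_uk (HAtom _ \<epsilon> _) \<longleftrightarrow> \<epsilon> \<noteq> Uk"
| "no_uk (HPure _) \<longleftrightarrow> True"
| "no_uk (HAnd A B) \<longleftrightarrow> no_uk A \<and> no_uk B"
| "no_uk (HOr A B) \<longleftrightarrow> no_uk A \<and> no_uk B"
| "no_uk (HForallS _ A) \<longleftrightarrow> no_uk A"
| "no_uk (HExistsS _ A) \<longleftrightarrow> no_uk A"
| "no_uk (HForallV _ A) \<longleftrightarrow> no_uk A"
| "no_uk (HExistsV _ A) \<longleftrightarrow> no_uk A"
| "no_uk (HStar A B) \<longleftrightarrow> no_uk A \<and> no_uk B"

fun no_star :: "hassn \<Rightarrow> bool" where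
  "no_star (HAtom _ _ _) \<longleftrightarrow> True"
| "no_star (HPure _) \<longleftrightarrow> True"
| "no_star (HAnd A B) \<longleftrightarrow> no_star A \<and> no_star B"
| "no_star (HOr A B) \<longleftrightarrow> no_star A \<and> no_star B"
| "no_star (HForallS _ A) \<longleftrightarrow> no_star A"
| "no_star (HExistsS _ A) \<longleftrightarrow> no_star A"
| "no_star (HForallV _ A) \<longleftrightarrow> no_star A"
| "no_star (HExistsV _ A) \<longleftrightarrow> no_star A"
| "no_star (HStar A B) \<longleftrightarrow> False"

fun ex_states_ok_er :: "hassn \<Rightarrow> bool" where
  "ex_states_ok_er (HAtom _ _ _) \<longleftrightarrow> True"
| "ex_states_ok_er (HPure _) \<longleftrightarrow> True"
| "ex_states_ok_er (HAnd A B) \<longleftrightarrow> ex_states_ok_er A \<and> ex_states_ok_er B"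
| "ex_states_ok_er (HOr A B) \<longleftrightarrow> ex_states_ok_er A \<and> ex_states_ok_er B"
| "ex_states_ok_er (HForallS _ A) \<longleftrightarrow> ex_states_ok_er A"
| "ex_states_ok_er (HExistsS \<sigma> A) \<longleftrightarrow> ex_states_ok_er A \<and>
     (\<forall>\<Sigma> V S \<omega>. \<omega> \<in> S \<longrightarrow> hsat (\<Sigma>(\<sigma> := \<omega>)) V A S \<longrightarrow> lab \<omega> \<in> {Ok, Er})"
| "ex_states_ok_er (HForallV _ A) \<longleftrightarrow> ex_states_ok_er A"
| "ex_states_ok_er (HExistsV _ A) \<longleftrightarrow> ex_states_ok_er A"
| "ex_states_ok_er (HStar A B) \<longleftrightarrow> ex_states_ok_er A \<and> ex_states_ok_er B"

end

theory Submission
  imports Defs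
begin

text \<open>The frame of all empty-heap Ok states is admissible and is a unit for the
hyper separating conjunction, so instantiating validity with it gives (1).
For (2), an overapproximating set differs from the actual one only in that each
Uk state may stand for arbitrary states with the same logical store. Atoms that
never mention Uk see only exact states; universally quantified states of the
actual set are matched by their overapproximations; and existentially quantified
states carry label Ok or Er, hence belong to the actual set. So a
\<star>-free assertion with these restrictions is closed under relaxation.\<close>

lemma overapprox_refl: "overapprox \<omega> \<omega>"
  unfolding overapprox_def by (cases "lab \<omega>") auto

definition emp_frame :: assn where
  "emp_frame = {(\<Lambda>, (s, fmempty), Ok) | \<Lambda> s. True}"

lemma admissible_frame_emp_frame: "admissible_frame C emp_frame"
  unfolding admissible_frame_def emp_frame_def lab_def by auto

lemma comb_emp_frame: "comb \<omega> (fst \<omega>, (fst (fst (snd \<omega>)), fmempty), Ok) \<omega>"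
  unfolding comb_def by (cases \<omega>; cases "snd (snd \<omega>)") auto

lemma comb_emp_frameD: "\<omega>2 \<in> emp_frame \<Longrightarrow> comb \<omega>1 \<omega>2 \<omega> \<Longrightarrow> \<omega> = \<omega>1"
  unfolding comb_def emp_frame_def by (cases \<omega>1; cases \<omega>; cases "snd (snd \<omega>1)") auto

lemma hstar_Pow_emp_frame: "hstar P (Pow emp_frame) = P"
proof (intro set_eqI iffI)
  fix S assume "S \<in> hstar P (Pow emp_frame)"
  then obtain SP SF where "SP \<in> P" "SF \<subseteq> emp_frame" "S \<subseteq> sep_conj SP SF"
    and SP_covered: "\<forall>\<omega>1\<in>SP. \<exists>\<omega>\<in>S. \<exists>\<omega>2\<in>SF. comb \<omega>1 \<omega>2 \<omega>"
    unfolding hstar_def by blast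
  have "S \<subseteq> SP"
    using \<open>S \<subseteq> sep_conj SP SF\<close> \<open>SF \<subseteq> emp_frame\<close> comb_emp_frameD
    unfolding sep_conj_def by blast
  moreover have "SP \<subseteq> S"
    using SP_covered \<open>SF \<subseteq> emp_frame\<close> comb_emp_frameD by blast
  ultimately show "S \<in> P" using \<open>SP \<in> P\<close> by simp
next
  fix S assume "S \<in> P"
  let ?SF = "(\<lambda>\<omega>. (fst \<omega>, (fst (fst (snd \<omega>)), fmempty), Ok)) ` S"
  have "?SF \<in> Pow emp_frame" unfolding emp_frame_def by auto
  moreover have "S \<subseteq> sep_conj S ?SF" unfolding sep_conj_def using comb_emp_frame by blast
  ultimately show "S \<in> hstar P (Pow emp_frame)"
    unfolding hstar_def using \<open>S \<in> P\<close> comb_emp_frame by blast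
qed

lemma valid_sem_in_relax: "valid P C Q \<Longrightarrow> S \<in> P \<Longrightarrow> sem C S \<in> relax Q"
  using admissible_frame_emp_frame hstar_Pow_emp_frame unfolding valid_def by metis

lemma hsat_overapprox_set:
  assumes "hsat \<Sigma>0 V Q S0" "overapprox_set S0 S" "\<forall>x. overapprox (\<Sigma>0 x) (\<Sigma> x)"
    and "no_uk Q" "no_star Q" "ex_states_ok_er Q"
  shows "hsat \<Sigma> V Q S"
  using assms
proof (induction Q arbitrary: \<Sigma>0 \<Sigma> V)
  case (HAtom x \<epsilon> p)
  then have "lab (\<Sigma>0 x) \<noteq> Uk" by auto
  then have "\<Sigma> x = \<Sigma>0 x"
    using HAtom.prems(3)[rule_format, of x] unfolding overapprox_def
    by (cases "lab (\<Sigma>0 x)") auto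
  then show ?case using HAtom.prems(1) by simp
next
  case (HForallS x Q)
  show ?case
  proof (simp, intro ballI)
    fix \<omega> assume "\<omega> \<in> S"
    then obtain \<omega>0 where "\<omega>0 \<in> S0" "overapprox \<omega>0 \<omega>"
      using HForallS.prems(2) unfolding overapprox_set_def by blast
    have "hsat (\<Sigma>0(x := \<omega>0)) V Q S0"
      using HForallS.prems(1) \<open>\<omega>0 \<in> S0\<close> by simp
    moreover have "\<forall>y. overapprox ((\<Sigma>0(x := \<omega>0)) y) ((\<Sigma>(x := \<omega>)) y)"
      using HForallS.prems(3) \<open>overapprox \<omega>0 \<omega>\<close> by simp
    ultimately show "hsat (\<Sigma>(x := \<omega>)) V Q S"
      using HForallS.IH HForallS.prems(2,4-6) by simp
  qed
next
  case (HExistsS x Q)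
  then obtain \<omega>0 where \<omega>0: "\<omega>0 \<in> S0" "hsat (\<Sigma>0(x := \<omega>0)) V Q S0" by auto
  then have "lab \<omega>0 \<in> {Ok, Er}" using HExistsS.prems(6) by (simp only: ex_states_ok_er.simps)
  then have "\<omega>0 \<in> S" using \<omega>0(1) HExistsS.prems(2) unfolding overapprox_set_def by blast
  moreover have "\<forall>y. overapprox ((\<Sigma>0(x := \<omega>0)) y) ((\<Sigma>(x := \<omega>0)) y)"
    using HExistsS.prems(3) overapprox_refl by simp
  with \<omega>0(2) have "hsat (\<Sigma>(x := \<omega>0)) V Q S"
    using HExistsS.IH HExistsS.prems(2,4-6) by simp
  ultimately show ?case by auto
qed auto

lemma relax_hsem_subset:
  assumes "no_uk Q" "no_star Q" "ex_states_ok_er Q"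
  shows "relax (hsem \<Sigma> V Q) \<subseteq> hsem \<Sigma> V Q"
  using hsat_overapprox_set[OF _ _ _ assms] overapprox_refl
  unfolding relax_def hsem_def by blast

theorem theorem4p2:
  shows "(\<forall>P C Q S. valid P C Q \<longrightarrow> S \<in> P \<longrightarrow> sem C S \<in> relax Q)
       \<and> (\<forall>P C (Q :: hassn) \<Sigma> V S. valid P C (hsem \<Sigma> V Q) \<longrightarrow> S \<in> P \<longrightarrow>
            no_uk Q \<longrightarrow> no_star Q \<longrightarrow> ex_states_ok_er Q \<longrightarrow> sem C S \<in> hsem \<Sigma> V Q)"
  using valid_sem_in_relax relax_hsem_subset by blast

end
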